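(* Let $(W,\odot,\mathbb{1})$ be a monoid and let $(M,+,\mathbb{0},\otimes)$ be an $\omega$-bicontinuous (left) $W$-module. Then for every $W$-wgcl program $C$ and every postweighting $f\in\mathrm{Wt}=M^\Sigma$, $$\mathrm{wlp}[\![C]\!](f)=\mathrm{wp}[\![C]\!](f)+\mathrm{wlp}[\![C]\!](\mathbb{0}),$$ where $\mathbb{0}$ is the constant-$\mathbb{0}$ weighting.
   Context: A (left) module over a monoid $(W,\odot,\mathbb{1})$ is a commutative monoid $(M,+,\mathbb{0})$ with an action $\otimes\colon W\times M\to M$ such that $(v\odot w)\otimes a=v\otimes(w\otimes a)$, $v\otimes(a+b)=(v\otimes a)+(v\otimes b)$, $\mathbb{1}\otimes a=a$, $v\otimes\mathbb{0}=\mathbb{0}$. The natural order is $a\preceq b$ iff $\exists c\colon a+c=b$. $M$ is $\omega$-bicontinuous if $\preceq$ is a partial order, $M$ has a greatest element $\top$, every increasing $\omega$-chain has a supremum and every decreasing $\omega$-chain has an infimum, and addition (in each argument) and, for each fixed $w\in W$, the map $a\mapsto w\otimes a$ preserve both suprema of increasing $\omega$-chains and infima of decreasing $\omega$-chains. States, programs: $\Sigma$ is the set of states (maps from variables to values); expressions $E$ evaluate to $E(\sigma)$; guards $\varphi$ are predicates on states. $W$-wgcl programs: $C::= x:=E \mid C;C \mid \mathtt{if}(\varphi)\{C\}\mathtt{else}\{C\} \mid \{C\}\oplus\{C\} \mid \mathtt{weight}\ a\ (a\in W) \mid \mathtt{while}(\varphi)\{C\}$. Weightings $\mathrm{Wt}=M^\Sigma$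 with pointwise operations and order; $([\varphi]\cdot f)(\sigma)=f(\sigma)$ if $\sigma\models\varphi$ else $\mathbb{0}$; $f[x/E](\sigma)=f(\sigma[x\mapsto E(\sigma)])$. For $T\in\{\mathrm{wp},\mathrm{wlp}\}$: $T[\![x:=E]\!](f)=f[x/E]$; $T[\![C_1;C_2]\!](f)=T[\![C_1]\!](T[\![C_2]\!](f))$; $T[\![\mathtt{if}(\varphi)\{C_1\}\mathtt{else}\{C_2\}]\!](f)=[\varphi]\cdot T[\![C_1]\!](f)+[\neg\varphi]\cdot T[\![C_2]\!](f)$; $T[\![\{C_1\}\oplus\{C_2\}]\!](f)=T[\![C_1]\!](f)+T[\![C_2]\!](f)$; $T[\![\mathtt{weight}\ a]\!](f)=a\otimes f$; $T[\![\mathtt{while}(\varphi)\{C'\}]\!](f)$ is the least fixed point (for $T=\mathrm{wp}$), resp. greatest fixed point (for $T=\mathrm{wlp}$), w.r.t. $\preceq$ of $X\mapsto[\neg\varphi]\cdot f+[\varphi]\cdot T[\![C']\!](X)$. *)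

theory Defs
  imports Main
begin

definition is_module :: "('w::monoid_mult \<Rightarrow> 'm::comm_monoid_add \<Rightarrow> 'm) \<Rightarrow> bool" where
  "is_module act \<longleftrightarrow>
     (\<forall>v w a. act (v * w) a = act v (act w a)) \<and>
     (\<forall>v a b. act v (a + b) = act v a + act v b) \<and>
     (\<forall>a. act 1 a = a) \<and>
     (\<forall>v. act v 0 = 0)"

definition nat_le :: "'m::comm_monoid_add \<Rightarrow> 'm \<Rightarrow> bool" where
  "nat_le a b \<longleftrightarrow> (\<exists>c. a + c = b)"

definition is_sup :: "'m::comm_monoid_add set \<Rightarrow> 'm \<Rightarrow> bool" where
  "is_sup S s \<longleftrightarrow> (\<forall>x\<in>S. nat_le x s) \<and> (\<forall>u. (\<forall>x\<in>S. nat_le x u) \<longrightarrow> nat_le s u)"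

definition is_inf :: "'m::comm_monoid_add set \<Rightarrow> 'm \<Rightarrow> bool" where
  "is_inf S s \<longleftrightarrow> (\<forall>x\<in>S. nat_le s x) \<and> (\<forall>u. (\<forall>x\<in>S. nat_le u x) \<longrightarrow> nat_le u s)"

definition inc_chain :: "(nat \<Rightarrow> 'm::comm_monoid_add) \<Rightarrow> bool" where
  "inc_chain c \<longleftrightarrow> (\<forall>n. nat_le (c n) (c (Suc n)))"

definition dec_chain :: "(nat \<Rightarrow> 'm::comm_monoid_add) \<Rightarrow> bool" where
  "dec_chain c \<longleftrightarrow> (\<forall>n. nat_le (c (Suc n)) (c n))"

definition bicont_map :: "('m::comm_monoid_add \<Rightarrow> 'm) \<Rightarrow> bool" where
  "bicont_map g \<longleftrightarrow>
     (\<forall>c s. inc_chain c \<longrightarrow> is_sup (range c) s \<longrightarrow> is_sup (range (g \<circ> c)) (g s)) \<and>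
     (\<forall>c s. dec_chain c \<longrightarrow> is_inf (range c) s \<longrightarrow> is_inf (range (g \<circ> c)) (g s))"

definition omega_bicontinuous_module ::
    "('w::monoid_mult \<Rightarrow> 'm::comm_monoid_add \<Rightarrow> 'm) \<Rightarrow> bool" where
  "omega_bicontinuous_module act \<longleftrightarrow>
     is_module act \<and>
     (\<forall>(a::'m) b. nat_le a b \<longrightarrow> nat_le b a \<longrightarrow> a = b) \<and>
     (\<exists>t. \<forall>a. nat_le a (t::'m)) \<and>
     (\<forall>c::nat \<Rightarrow> 'm. inc_chain c \<longrightarrow> (\<exists>s. is_sup (range c) s)) \<and>
     (\<forall>c::nat \<Rightarrow> 'm. dec_chain c \<longrightarrow> (\<exists>s. is_inf (range c) s)) \<and>
     (\<forall>a::'m. bicont_map (\<lambda>b. a + b)) \<and>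
     (\<forall>a::'m. bicont_map (\<lambda>b. b + a)) \<and>
     (\<forall>w. bicont_map (act w))"

type_synonym ('v, 'a) state = "'v \<Rightarrow> 'a"

datatype ('w, 'v, 'a) wgcl =
    Assign 'v "('v, 'a) state \<Rightarrow> 'a"
  | Seq "('w, 'v, 'a) wgcl" "('w, 'v, 'a) wgcl"
  | If "('v, 'a) state \<Rightarrow> bool" "('w, 'v, 'a) wgcl" "('w, 'v, 'a) wgcl"
  | Branch "('w, 'v, 'a) wgcl" "('w, 'v, 'a) wgcl"
  | Weight 'w
  | While "('v, 'a) state \<Rightarrow> bool" "('w, 'v, 'a) wgcl"

type_synonym ('v, 'a, 'm) weighting = "('v, 'a) state \<Rightarrow> 'm"

definition wt_le :: "('v, 'a, 'm::comm_monoid_add) weighting \<Rightarrow> ('v, 'a, 'm) weighting \<Rightarrow> bool" where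
  "wt_le f g \<longleftrightarrow> (\<forall>\<sigma>. nat_le (f \<sigma>) (g \<sigma>))"

definition wt_lfp :: "(('v, 'a, 'm::comm_monoid_add) weighting \<Rightarrow> ('v, 'a, 'm) weighting) \<Rightarrow> ('v, 'a, 'm) weighting" where
  "wt_lfp F = (THE X. F X = X \<and> (\<forall>Y. F Y = Y \<longrightarrow> wt_le X Y))"

definition wt_gfp :: "(('v, 'a, 'm::comm_monoid_add) weighting \<Rightarrow> ('v, 'a, 'm) weighting) \<Rightarrow> ('v, 'a, 'm) weighting" where
  "wt_gfp F = (THE X. F X = X \<and> (\<forall>Y. F Y = Y \<longrightarrow> wt_le Y X))"

definition guard_mult :: "(('v, 'a) state \<Rightarrow> bool) \<Rightarrow> ('v, 'a, 'm::zero) weighting \<Rightarrow> ('v, 'a, 'm) weighting" where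
  "guard_mult \<phi> f = (\<lambda>\<sigma>. if \<phi> \<sigma> then f \<sigma> else 0)"

fun wp :: "('w::monoid_mult \<Rightarrow> 'm::comm_monoid_add \<Rightarrow> 'm) \<Rightarrow> ('w, 'v, 'a) wgcl
           \<Rightarrow> ('v, 'a, 'm) weighting \<Rightarrow> ('v, 'a, 'm) weighting" where
  "wp act (Assign x E) f = (\<lambda>\<sigma>. f (\<sigma>(x := E \<sigma>)))"
| "wp act (Seq C1 C2) f = wp act C1 (wp act C2 f)"
| "wp act (If \<phi> C1 C2) f =
     (\<lambda>\<sigma>. guard_mult \<phi> (wp act C1 f) \<sigma> + guard_mult (\<lambda>s. \<not> \<phi> s) (wp act C2 f) \<sigma>)"
| "wp act (Branch C1 C2) f = (\<lambda>\<sigma>. wp act C1 f \<sigma> + wp act C2 f \<sigma>)"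
| "wp act (Weight w) f = (\<lambda>\<sigma>. act w (f \<sigma>))"
| "wp act (While \<phi> C) f =
     wt_lfp (\<lambda>X \<sigma>. guard_mult (\<lambda>s. \<not> \<phi> s) f \<sigma> + guard_mult \<phi> (wp act C X) \<sigma>)"

fun wlp :: "('w::monoid_mult \<Rightarrow> 'm::comm_monoid_add \<Rightarrow> 'm) \<Rightarrow> ('w, 'v, 'a) wgcl
           \<Rightarrow> ('v, 'a, 'm) weighting \<Rightarrow> ('v, 'a, 'm) weighting" where
  "wlp act (Assign x E) f = (\<lambda>\<sigma>. f (\<sigma>(x := E \<sigma>)))"
| "wlp act (Seq C1 C2) f = wlp act C1 (wlp act C2 f)"
| "wlp act (If \<phi> C1 C2) f =
     (\<lambda>\<sigma>. guard_mult \<phi> (wlp act C1 f) \<sigma> + guard_mult (\<lambda>s. \<not> \<phi> s) (wlp act C2 f) \<sigma>)"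
| "wlp act (Branch C1 C2) f = (\<lambda>\<sigma>. wlp act C1 f \<sigma> + wlp act C2 f \<sigma>)"
| "wlp act (Weight w) f = (\<lambda>\<sigma>. act w (f \<sigma>))"
| "wlp act (While \<phi> C) f =
     wt_gfp (\<lambda>X \<sigma>. guard_mult (\<lambda>s. \<not> \<phi> s) f \<sigma> + guard_mult \<phi> (wlp act C X) \<sigma>)"

end

theory Submission
  imports Defs "HOL-Library.Function_Algebras"
begin

(* Both transformers are fixpoint semantics for orders in which the module operations are
   omega-continuous: wp for the natural order (loops are least fixpoints, reached from 0) and wlp
   for its converse (loops are greatest fixpoints, reached from the top element).  By induction on
   programs, wp is additive and continuous and wlp is co-continuous, so Kleene's theorem applies to
   every loop.
   With L the wp of the loop at f, the map Z |-> L + Z fixes the top element, preserves infima of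
   decreasing chains and turns the wlp loop functional for 0 into the one for f, so it carries the
   Kleene iterates, hence the greatest fixpoint, for 0 to those for f. *)

section \<open>Omega-chains and Kleene fixpoints\<close>

definition is_lub :: "('a \<Rightarrow> 'a \<Rightarrow> bool) \<Rightarrow> (nat \<Rightarrow> 'a) \<Rightarrow> 'a \<Rightarrow> bool" where
  "is_lub le c s \<longleftrightarrow> (\<forall>n. le (c n) s) \<and> (\<forall>u. (\<forall>n. le (c n) u) \<longrightarrow> le s u)"

definition ascending_chain :: "('a \<Rightarrow> 'a \<Rightarrow> bool) \<Rightarrow> (nat \<Rightarrow> 'a) \<Rightarrow> bool" where
  "ascending_chain le c \<longleftrightarrow> (\<forall>n. le (c n) (c (Suc n)))"

definition chain_continuous :: "('a \<Rightarrow> 'a \<Rightarrow> bool) \<Rightarrow> ('a \<Rightarrow> 'a) \<Rightarrow> bool" where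
  "chain_continuous le g \<longleftrightarrow>
     (\<forall>c s. ascending_chain le c \<longrightarrow> is_lub le c s \<longrightarrow> is_lub le (\<lambda>n. g (c n)) (g s))"

definition least_fixp :: "('a \<Rightarrow> 'a \<Rightarrow> bool) \<Rightarrow> ('a \<Rightarrow> 'a) \<Rightarrow> 'a" where
  "least_fixp le T = (THE x. T x = x \<and> (\<forall>y. T y = y \<longrightarrow> le x y))"

lemma chain_continuous_id: "chain_continuous le (\<lambda>x. x)"
  by (simp add: chain_continuous_def)

lemma chain_continuous_const: "reflp le \<Longrightarrow> chain_continuous le (\<lambda>x. a)"
  by (simp add: chain_continuous_def is_lub_def reflp_def)

locale omega_cpo =
  fixes le :: "'a \<Rightarrow> 'a \<Rightarrow> bool" (infix \<open>\<sqsubseteq>\<close> 50)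
    and bottom :: 'a
  assumes refl: "x \<sqsubseteq> x"
    and trans: "x \<sqsubseteq> y \<Longrightarrow> y \<sqsubseteq> z \<Longrightarrow> x \<sqsubseteq> z"
    and antisym: "x \<sqsubseteq> y \<Longrightarrow> y \<sqsubseteq> x \<Longrightarrow> x = y"
    and bottom_least: "bottom \<sqsubseteq> x"
    and chain_has_lub: "ascending_chain (\<sqsubseteq>) c \<Longrightarrow> \<exists>s. is_lub (\<sqsubseteq>) c s"
begin

lemma reflp: "reflp (\<sqsubseteq>)"
  by (simp add: reflp_def refl)

lemma lub_unique: "is_lub (\<sqsubseteq>) c x \<Longrightarrow> is_lub (\<sqsubseteq>) c y \<Longrightarrow> x = y"
  unfolding is_lub_def by (blast intro: antisym)

lemma lub_const: "is_lub (\<sqsubseteq>) (\<lambda>n. x) x"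
  by (simp add: is_lub_def refl)

lemma chain_const: "ascending_chain (\<sqsubseteq>) (\<lambda>n. x)"
  by (simp add: ascending_chain_def refl)

lemma chain_mono:
  assumes "ascending_chain (\<sqsubseteq>) c" and "m \<le> n"
  shows "c m \<sqsubseteq> c n"
  using assms(2)
proof (induction n rule: dec_induct)
  case base
  show ?case by (rule refl)
next
  case (step n)
  with assms(1) show ?case unfolding ascending_chain_def by (blast intro: trans)
qed

lemma chain_continuous_mono:
  assumes g: "chain_continuous (\<sqsubseteq>) g" and "x \<sqsubseteq> y"
  shows "g x \<sqsubseteq> g y"
proof -
  let ?c = "\<lambda>n::nat. if n = 0 then x else y"
  have "ascending_chain (\<sqsubseteq>) ?c"
    using \<open>x \<sqsubseteq> y\<close> by (simp add: ascending_chain_def refl)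
  moreover have "is_lub (\<sqsubseteq>) ?c y"
    unfolding is_lub_def
  proof (intro conjI allI impI)
    fix n :: nat
    show "?c n \<sqsubseteq> y"
      using \<open>x \<sqsubseteq> y\<close> by (simp add: refl)
  next
    fix u
    assume "\<forall>n. ?c n \<sqsubseteq> u"
    from this[rule_format, of 1] show "y \<sqsubseteq> u" by simp
  qed
  ultimately have "is_lub (\<sqsubseteq>) (\<lambda>n. g (?c n)) (g y)"
    using g unfolding chain_continuous_def by blast
  then have "g (?c 0) \<sqsubseteq> g y"
    unfolding is_lub_def by blast
  then show ?thesis by simp
qed

lemma chain_continuous_chain:
  "chain_continuous (\<sqsubseteq>) g \<Longrightarrow> ascending_chain (\<sqsubseteq>) c \<Longrightarrow> ascending_chain (\<sqsubseteq>) (\<lambda>n. g (c n))"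
  by (simp add: ascending_chain_def chain_continuous_mono)

lemma chain_continuous_comp:
  "chain_continuous (\<sqsubseteq>) f \<Longrightarrow> chain_continuous (\<sqsubseteq>) g \<Longrightarrow> chain_continuous (\<sqsubseteq>) (\<lambda>x. f (g x))"
  by (simp add: chain_continuous_def chain_continuous_chain)

lemma lub_Suc:
  assumes "ascending_chain (\<sqsubseteq>) c" and "is_lub (\<sqsubseteq>) (\<lambda>n. c (Suc n)) s"
  shows "is_lub (\<sqsubseteq>) c s"
  using assms unfolding is_lub_def ascending_chain_def by (metis not0_implies_Suc trans)

lemma iterates_chain:
  assumes "chain_continuous (\<sqsubseteq>) T"
  shows "ascending_chain (\<sqsubseteq>) (\<lambda>n. (T ^^ n) bottom)"
  unfolding ascending_chain_def
proof
  fix n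
  show "(T ^^ n) bottom \<sqsubseteq> (T ^^ Suc n) bottom"
    by (induction n) (simp_all add: bottom_least chain_continuous_mono[OF assms])
qed

lemma least_fixp_kleene:
  assumes T: "chain_continuous (\<sqsubseteq>) T"
  shows "is_lub (\<sqsubseteq>) (\<lambda>n. (T ^^ n) bottom) (least_fixp (\<sqsubseteq>) T)"
    and "T (least_fixp (\<sqsubseteq>) T) = least_fixp (\<sqsubseteq>) T"
proof -
  let ?I = "\<lambda>n. (T ^^ n) bottom"
  have chain: "ascending_chain (\<sqsubseteq>) ?I"
    using T by (rule iterates_chain)
  then obtain s where s: "is_lub (\<sqsubseteq>) ?I s"
    using chain_has_lub by blast
  have "is_lub (\<sqsubseteq>) (\<lambda>n. T (?I n)) (T s)"
    using T chain s unfolding chain_continuous_def by blast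
  then have "is_lub (\<sqsubseteq>) ?I (T s)"
    using lub_Suc[OF chain] by simp
  then have fixed: "T s = s"
    using s by (rule lub_unique)
  have least: "s \<sqsubseteq> y" if "T y = y" for y
  proof -
    have "?I n \<sqsubseteq> y" for n
    proof (induction n)
      case 0
      show ?case by (simp add: bottom_least)
    next
      case (Suc n)
      then have "T (?I n) \<sqsubseteq> T y" by (rule chain_continuous_mono[OF T])
      with that show ?case by simp
    qed
    with s show ?thesis unfolding is_lub_def by blast
  qed
  have "least_fixp (\<sqsubseteq>) T = s"
    unfolding least_fixp_def using fixed least by (blast intro: the_equality antisym)
  with s fixed show "is_lub (\<sqsubseteq>) ?I (least_fixp (\<sqsubseteq>) T)" "T (least_fixp (\<sqsubseteq>) T) = least_fixp (\<sqsubseteq>) T"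
    by simp_all
qed

lemma chain_continuous2_mono:
  assumes "\<And>x. chain_continuous (\<sqsubseteq>) (H x)" and "\<And>y. chain_continuous (\<sqsubseteq>) (\<lambda>x. H x y)"
    and "x \<sqsubseteq> x'" and "y \<sqsubseteq> y'"
  shows "H x y \<sqsubseteq> H x' y'"
  using chain_continuous_mono[OF assms(1,4)] chain_continuous_mono[OF assms(2,3)] by (rule trans)

lemma chain_diagonal:
  assumes "\<And>x. chain_continuous (\<sqsubseteq>) (H x)" and "\<And>y. chain_continuous (\<sqsubseteq>) (\<lambda>x. H x y)"
    and "ascending_chain (\<sqsubseteq>) c" and "ascending_chain (\<sqsubseteq>) d"
  shows "ascending_chain (\<sqsubseteq>) (\<lambda>n. H (c n) (d n))"
  using assms unfolding ascending_chain_def by (blast intro: chain_continuous2_mono)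

lemma lub_diagonal:
  assumes H1: "\<And>x. chain_continuous (\<sqsubseteq>) (H x)" and H2: "\<And>y. chain_continuous (\<sqsubseteq>) (\<lambda>x. H x y)"
    and c: "ascending_chain (\<sqsubseteq>) c" "is_lub (\<sqsubseteq>) c x"
    and d: "ascending_chain (\<sqsubseteq>) d" "is_lub (\<sqsubseteq>) d y"
  shows "is_lub (\<sqsubseteq>) (\<lambda>n. H (c n) (d n)) (H x y)"
proof -
  have upper: "H (c n) (d n) \<sqsubseteq> H x y" for n
    using c(2) d(2) unfolding is_lub_def by (blast intro: chain_continuous2_mono[OF H1 H2])
  have "H x y \<sqsubseteq> u" if u: "\<And>n. H (c n) (d n) \<sqsubseteq> u" for u
  proof -
    \<comment> \<open>the diagonal is cofinal in the double sequence, since H is monotone in both arguments\<close>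
    have "H (c m) (d n) \<sqsubseteq> u" for m n
      using chain_continuous2_mono[OF H1 H2 chain_mono[OF c(1)] chain_mono[OF d(1)],
          of m "max m n" n "max m n"] u[of "max m n"]
      by (auto intro: trans)
    moreover have "is_lub (\<sqsubseteq>) (\<lambda>n. H (c m) (d n)) (H (c m) y)" for m
      using H1 d unfolding chain_continuous_def by blast
    ultimately have "H (c m) y \<sqsubseteq> u" for m
      unfolding is_lub_def by blast
    moreover have "is_lub (\<sqsubseteq>) (\<lambda>m. H (c m) y) (H x y)"
      using H2 c unfolding chain_continuous_def by blast
    ultimately show ?thesis
      unfolding is_lub_def by blast
  qed
  with upper show ?thesis
    unfolding is_lub_def by blast
qed

lemma chain_continuous_binop:
  assumes "\<And>x. chain_continuous (\<sqsubseteq>) (H x)" and "\<And>y. chain_continuous (\<sqsubseteq>) (\<lambda>x. H x y)"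
    and f: "chain_continuous (\<sqsubseteq>) f" and g: "chain_continuous (\<sqsubseteq>) g"
  shows "chain_continuous (\<sqsubseteq>) (\<lambda>z. H (f z) (g z))"
  unfolding chain_continuous_def
proof (intro allI impI)
  fix c s
  assume c: "ascending_chain (\<sqsubseteq>) c" "is_lub (\<sqsubseteq>) c s"
  have "is_lub (\<sqsubseteq>) (\<lambda>n. f (c n)) (f s)" and "is_lub (\<sqsubseteq>) (\<lambda>n. g (c n)) (g s)"
    using f g c unfolding chain_continuous_def by blast+
  with chain_continuous_chain[OF f c(1)] chain_continuous_chain[OF g c(1)]
  show "is_lub (\<sqsubseteq>) (\<lambda>n. H (f (c n)) (g (c n))) (H (f s) (g s))"
    by (intro lub_diagonal[OF assms(1,2)])
qed

lemma lub_swap: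
  assumes "\<And>m. is_lub (\<sqsubseteq>) (\<lambda>n. I m n) (a m)" and "\<And>n. is_lub (\<sqsubseteq>) (\<lambda>m. I m n) (b n)"
    and "is_lub (\<sqsubseteq>) b s"
  shows "is_lub (\<sqsubseteq>) a s"
  unfolding is_lub_def
proof (intro conjI allI impI)
  fix m
  have "I m n \<sqsubseteq> s" for n
    using assms(2,3) unfolding is_lub_def by (meson trans)
  with assms(1) show "a m \<sqsubseteq> s"
    unfolding is_lub_def by blast
next
  fix u
  assume "\<forall>m. a m \<sqsubseteq> u"
  then have "I m n \<sqsubseteq> u" for m n
    using assms(1) unfolding is_lub_def by (meson trans)
  then have "b n \<sqsubseteq> u" for n
    using assms(2) unfolding is_lub_def by blast
  with assms(3) show "s \<sqsubseteq> u"
    unfolding is_lub_def by blast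
qed

lemma chain_continuous_least_fixp:
  assumes H1: "\<And>p. chain_continuous (\<sqsubseteq>) (H p)" and H2: "\<And>x. chain_continuous (\<sqsubseteq>) (\<lambda>p. H p x)"
  shows "chain_continuous (\<sqsubseteq>) (\<lambda>p. least_fixp (\<sqsubseteq>) (H p))"
  unfolding chain_continuous_def
proof (intro allI impI)
  fix c s
  assume c: "ascending_chain (\<sqsubseteq>) c" "is_lub (\<sqsubseteq>) c s"
  define I where "I m n = (H (c m) ^^ n) bottom" for m n
  have "ascending_chain (\<sqsubseteq>) (\<lambda>m. I m n) \<and> is_lub (\<sqsubseteq>) (\<lambda>m. I m n) ((H s ^^ n) bottom)" for n
  proof (induction n)
    case 0
    show ?case by (simp add: I_def chain_const lub_const)
  next
    case (Suc n)
    then show ?case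
      using chain_diagonal[OF H1 H2 c(1)] lub_diagonal[OF H1 H2 c] by (simp add: I_def)
  qed
  then show "is_lub (\<sqsubseteq>) (\<lambda>m. least_fixp (\<sqsubseteq>) (H (c m))) (least_fixp (\<sqsubseteq>) (H s))"
    using least_fixp_kleene(1)[OF H1] lub_swap[of I _ "\<lambda>n. (H s ^^ n) bottom"] by (simp add: I_def)
qed

lemma least_fixp_transfer:
  assumes T: "chain_continuous (\<sqsubseteq>) T" and S: "chain_continuous (\<sqsubseteq>) S"
    and h: "chain_continuous (\<sqsubseteq>) h" and "h bottom = bottom" and "\<And>x. T (h x) = h (S x)"
  shows "least_fixp (\<sqsubseteq>) T = h (least_fixp (\<sqsubseteq>) S)"
proof -
  have "(T ^^ n) bottom = h ((S ^^ n) bottom)" for n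
    by (induction n) (simp_all add: assms(4,5))
  moreover have "is_lub (\<sqsubseteq>) (\<lambda>n. h ((S ^^ n) bottom)) (h (least_fixp (\<sqsubseteq>) S))"
    using h iterates_chain[OF S] least_fixp_kleene(1)[OF S] unfolding chain_continuous_def by blast
  ultimately show ?thesis
    using least_fixp_kleene(1)[OF T] lub_unique by simp
qed

end

section \<open>Pointwise orders on function spaces\<close>

lemma is_lub_rel_fun:
  "is_lub (rel_fun (=) R) F S \<longleftrightarrow> (\<forall>x. is_lub R (\<lambda>n. F n x) (S x))"
proof
  assume lub: "is_lub (rel_fun (=) R) F S"
  show "\<forall>x. is_lub R (\<lambda>n. F n x) (S x)"
  proof (intro allI)
    fix x
    have "R (S x) u" if "\<forall>n. R (F n x) u" for u
    proof -
      have "rel_fun (=) R S (S(x := u))"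
        using lub that unfolding is_lub_def rel_fun_eq_rel by (metis fun_upd_apply)
      then show ?thesis by (metis fun_upd_same rel_fun_eq_rel)
    qed
    with lub show "is_lub R (\<lambda>n. F n x) (S x)"
      unfolding is_lub_def rel_fun_eq_rel by blast
  qed
next
  assume "\<forall>x. is_lub R (\<lambda>n. F n x) (S x)"
  then show "is_lub (rel_fun (=) R) F S"
    unfolding is_lub_def rel_fun_eq_rel by blast
qed

lemma ascending_chain_rel_fun:
  "ascending_chain (rel_fun (=) R) F \<longleftrightarrow> (\<forall>x. ascending_chain R (\<lambda>n. F n x))"
  unfolding ascending_chain_def rel_fun_eq_rel by blast

lemma omega_cpo_rel_fun:
  assumes "omega_cpo R b"
  shows "omega_cpo (rel_fun (=) R) (\<lambda>_. b)"
proof -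
  interpret omega_cpo R b by (fact assms)
  have "\<exists>S. is_lub (rel_fun (=) R) F S" if "ascending_chain (rel_fun (=) R) F" for F
  proof -
    have "\<forall>x. \<exists>s. is_lub R (\<lambda>n. F n x) s"
      using that chain_has_lub by (simp add: ascending_chain_rel_fun)
    then show ?thesis
      unfolding is_lub_rel_fun by metis
  qed
  then show ?thesis
    by unfold_locales (auto simp: rel_fun_eq_rel refl bottom_least fun_eq_iff intro: trans antisym)
qed

lemma chain_continuous_pointwise:
  assumes "\<And>x. chain_continuous R (g x)"
  shows "chain_continuous (rel_fun (=) R) (\<lambda>X x. g x (X x))"
  using assms by (simp add: chain_continuous_def is_lub_rel_fun ascending_chain_rel_fun)

lemma chain_continuous_precompose:
  "chain_continuous (rel_fun (=) R) (\<lambda>X x. X (h x))"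
  by (simp add: chain_continuous_def is_lub_rel_fun ascending_chain_rel_fun)

lemma chain_continuous_select:
  fixes T1 T2 :: "('a \<Rightarrow> 'b) \<Rightarrow> 'a \<Rightarrow> 'b"
  assumes "chain_continuous (rel_fun (=) R) T1" and "chain_continuous (rel_fun (=) R) T2"
  shows "chain_continuous (rel_fun (=) R) (\<lambda>X x. if P x then T1 X x else T2 X x)"
  unfolding chain_continuous_def is_lub_rel_fun
proof (intro allI impI)
  fix c :: "nat \<Rightarrow> 'a \<Rightarrow> 'b" and s x
  assume "ascending_chain (rel_fun (=) R) c" and "\<forall>x. is_lub R (\<lambda>n. c n x) (s x)"
  with assms have "is_lub R (\<lambda>n. T1 (c n) x) (T1 s x)" and "is_lub R (\<lambda>n. T2 (c n) x) (T2 s x)"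
    unfolding chain_continuous_def is_lub_rel_fun by blast+
  then show "is_lub R (\<lambda>n. if P x then T1 (c n) x else T2 (c n) x) (if P x then T1 s x else T2 s x)"
    by (cases "P x") simp_all
qed

lemma chain_continuous_plus_fun:
  fixes R :: "'m::ab_semigroup_add \<Rightarrow> 'm \<Rightarrow> bool"
  assumes "\<And>a. chain_continuous R ((+) a)"
  shows "chain_continuous (rel_fun (=) R) ((+) A)"
    and "chain_continuous (rel_fun (=) R) (\<lambda>X. X + A)"
proof -
  have eq: "(+) A = (\<lambda>X x. A x + X x)"
    by (simp add: fun_eq_iff)
  show "chain_continuous (rel_fun (=) R) ((+) A)"
    unfolding eq by (rule chain_continuous_pointwise) (rule assms)
  moreover have "(\<lambda>X. X + A) = (+) A"
    by (simp add: fun_eq_iff add.commute)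
  ultimately show "chain_continuous (rel_fun (=) R) (\<lambda>X. X + A)"
    by simp
qed

lemma chain_continuous_loop_body:
  assumes "reflp R" and "chain_continuous (rel_fun (=) R) T"
  shows "chain_continuous (rel_fun (=) R) (\<lambda>X x. if P x then T X x else Z x)"
    and "chain_continuous (rel_fun (=) R) (\<lambda>Z x. if P x then T X x else Z x)"
proof -
  have "reflp (rel_fun (=) R)"
    using assms(1) by (simp add: reflp_def rel_fun_eq_rel)
  then show "chain_continuous (rel_fun (=) R) (\<lambda>X x. if P x then T X x else Z x)"
    and "chain_continuous (rel_fun (=) R) (\<lambda>Z x. if P x then T X x else Z x)"
    using assms(2)
    by (auto intro: chain_continuous_select chain_continuous_const chain_continuous_id)
qed

section \<open>The natural order of an omega-bicontinuous module\<close>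

lemma nat_le_refl: "nat_le a a"
  unfolding nat_le_def by (metis add_0_right)

lemma nat_le_trans: "nat_le a b \<Longrightarrow> nat_le b c \<Longrightarrow> nat_le a c"
  unfolding nat_le_def by (metis add.assoc)

lemma nat_le_reflp: "reflp nat_le"
  by (simp add: reflp_def nat_le_refl)

lemma nat_le_zero: "nat_le 0 a"
  unfolding nat_le_def by simp

lemma nat_le_add_left: "nat_le a (b + a)"
  unfolding nat_le_def by (metis add.commute)

lemma is_sup_range_iff: "is_sup (range c) s \<longleftrightarrow> is_lub nat_le c s"
  unfolding is_sup_def is_lub_def by auto

lemma is_inf_range_iff: "is_inf (range c) s \<longleftrightarrow> is_lub nat_le\<inverse>\<inverse> c s"
  unfolding is_inf_def is_lub_def by auto

lemma bicont_map_iff: "bicont_map g \<longleftrightarrow> chain_continuous nat_le g \<and> chain_continuous nat_le\<inverse>\<inverse> g"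
  unfolding bicont_map_def chain_continuous_def inc_chain_def dec_chain_def ascending_chain_def
    is_sup_range_iff is_inf_range_iff comp_def conversep_iff ..

locale bicontinuous_module =
  fixes act :: "'w::monoid_mult \<Rightarrow> 'm::comm_monoid_add \<Rightarrow> 'm"
  assumes omega_bicontinuous: "omega_bicontinuous_module act"
begin

lemma act_add: "act w (a + b) = act w a + act w b"
  using omega_bicontinuous unfolding omega_bicontinuous_module_def is_module_def by blast

lemma act_zero: "act w 0 = 0"
  using omega_bicontinuous unfolding omega_bicontinuous_module_def is_module_def by blast

lemma nat_le_antisym: "nat_le a b \<Longrightarrow> nat_le b a \<Longrightarrow> a = (b::'m)"
  using omega_bicontinuous unfolding omega_bicontinuous_module_def by blast

lemma add_continuous:
  fixes a :: 'm
  shows "chain_continuous nat_le ((+) a)" and "chain_continuous nat_le\<inverse>\<inverse> ((+) a)"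
  using omega_bicontinuous by (simp_all add: omega_bicontinuous_module_def bicont_map_iff)

lemma act_continuous:
  shows "chain_continuous nat_le (act w)" and "chain_continuous nat_le\<inverse>\<inverse> (act w)"
  using omega_bicontinuous by (simp_all add: omega_bicontinuous_module_def bicont_map_iff)

lemma omega_cpo_nat_le: "omega_cpo (nat_le :: 'm \<Rightarrow> 'm \<Rightarrow> bool) 0"
proof
  show "\<exists>s. is_lub nat_le c s" if "ascending_chain nat_le c" for c :: "nat \<Rightarrow> 'm"
    using omega_bicontinuous that
    unfolding omega_bicontinuous_module_def inc_chain_def ascending_chain_def is_sup_range_iff
    by blast
qed (auto intro: nat_le_refl nat_le_trans nat_le_antisym nat_le_zero)

lemma omega_cpo_nat_le_converse:
  obtains t :: 'm where "omega_cpo nat_le\<inverse>\<inverse> t"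
proof -
  obtain t :: 'm where "\<forall>a. nat_le a t"
    using omega_bicontinuous unfolding omega_bicontinuous_module_def by blast
  moreover have "\<exists>s. is_lub nat_le\<inverse>\<inverse> c s" if "ascending_chain nat_le\<inverse>\<inverse> c" for c :: "nat \<Rightarrow> 'm"
    using omega_bicontinuous that
    unfolding omega_bicontinuous_module_def dec_chain_def ascending_chain_def is_inf_range_iff
    by auto
  ultimately have "omega_cpo nat_le\<inverse>\<inverse> t"
    by unfold_locales (auto intro: nat_le_refl nat_le_trans nat_le_antisym)
  then show thesis by (rule that)
qed

end

section \<open>Weighting transformers\<close>

lemma guard_mult_add_complement:
  fixes g h :: "('v, 'a, 'm::monoid_add) weighting"
  shows "guard_mult \<phi> g \<sigma> + guard_mult (\<lambda>s. \<not> \<phi> s) h \<sigma> = (if \<phi> \<sigma> then g \<sigma> else h \<sigma>)"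
  by (simp add: guard_mult_def)

lemma guard_mult_complement_add:
  fixes g h :: "('v, 'a, 'm::monoid_add) weighting"
  shows "guard_mult (\<lambda>s. \<not> \<phi> s) h \<sigma> + guard_mult \<phi> g \<sigma> = (if \<phi> \<sigma> then g \<sigma> else h \<sigma>)"
  by (simp add: guard_mult_def)

lemma wt_lfp_eq_least_fixp: "wt_lfp = least_fixp (rel_fun (=) nat_le)"
  by (simp add: fun_eq_iff wt_lfp_def least_fixp_def wt_le_def rel_fun_eq_rel)

lemma wt_gfp_eq_least_fixp: "wt_gfp = least_fixp (rel_fun (=) nat_le\<inverse>\<inverse>)"
  by (simp add: fun_eq_iff wt_gfp_def least_fixp_def wt_le_def rel_fun_eq_rel)

lemma wp_While:
  "wp act (While \<phi> C) f =
     least_fixp (rel_fun (=) nat_le) (\<lambda>X \<sigma>. if \<phi> \<sigma> then wp act C X \<sigma> else f \<sigma>)"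
  by (simp add: guard_mult_complement_add wt_lfp_eq_least_fixp)

lemma wlp_While:
  "wlp act (While \<phi> C) f =
     least_fixp (rel_fun (=) nat_le\<inverse>\<inverse>) (\<lambda>X \<sigma>. if \<phi> \<sigma> then wlp act C X \<sigma> else f \<sigma>)"
  by (simp add: guard_mult_complement_add wt_gfp_eq_least_fixp)

fun wgcl_transformer ::
    "(('v, 'a, 'm) weighting \<Rightarrow> ('v, 'a, 'm) weighting \<Rightarrow> bool) \<Rightarrow> ('w \<Rightarrow> 'm::plus \<Rightarrow> 'm)
     \<Rightarrow> ('w, 'v, 'a) wgcl \<Rightarrow> ('v, 'a, 'm) weighting \<Rightarrow> ('v, 'a, 'm) weighting" where
  "wgcl_transformer le act (Assign x E) = (\<lambda>f \<sigma>. f (\<sigma>(x := E \<sigma>)))"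
| "wgcl_transformer le act (Seq C1 C2) =
     (\<lambda>f. wgcl_transformer le act C1 (wgcl_transformer le act C2 f))"
| "wgcl_transformer le act (If \<phi> C1 C2) =
     (\<lambda>f \<sigma>. if \<phi> \<sigma> then wgcl_transformer le act C1 f \<sigma> else wgcl_transformer le act C2 f \<sigma>)"
| "wgcl_transformer le act (Branch C1 C2) =
     (\<lambda>f. wgcl_transformer le act C1 f + wgcl_transformer le act C2 f)"
| "wgcl_transformer le act (Weight w) = (\<lambda>f \<sigma>. act w (f \<sigma>))"
| "wgcl_transformer le act (While \<phi> C) =
     (\<lambda>f. least_fixp le (\<lambda>X \<sigma>. if \<phi> \<sigma> then wgcl_transformer le act C X \<sigma> else f \<sigma>))"

lemma wp_eq_wgcl_transformer: "wp act C = wgcl_transformer (rel_fun (=) nat_le) act C"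
proof
  show "wp act C f = wgcl_transformer (rel_fun (=) nat_le) act C f" for f
    by (induction C arbitrary: f)
      (simp_all add: guard_mult_add_complement guard_mult_complement_add wt_lfp_eq_least_fixp
        plus_fun_def)
qed

lemma wlp_eq_wgcl_transformer: "wlp act C = wgcl_transformer (rel_fun (=) nat_le\<inverse>\<inverse>) act C"
proof
  show "wlp act C f = wgcl_transformer (rel_fun (=) nat_le\<inverse>\<inverse>) act C f" for f
    by (induction C arbitrary: f)
      (simp_all add: guard_mult_add_complement guard_mult_complement_add wt_gfp_eq_least_fixp
        plus_fun_def)
qed

lemma chain_continuous_wgcl_transformer:
  fixes R :: "'m::comm_monoid_add \<Rightarrow> 'm \<Rightarrow> bool"
  assumes cpo: "omega_cpo R b"
    and add: "\<And>a. chain_continuous R ((+) a)" and act: "\<And>w. chain_continuous R (act w)"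
  shows "chain_continuous (rel_fun (=) R) (wgcl_transformer (rel_fun (=) R) act C)"
proof -
  interpret omega_cpo "rel_fun (=) R" "\<lambda>_. b"
    using cpo by (rule omega_cpo_rel_fun)
  have "reflp R"
    using cpo by (rule omega_cpo.reflp)
  show ?thesis
  proof (induction C)
    case (Assign x E)
    show ?case by (simp add: chain_continuous_precompose)
  next
    case (Seq C1 C2)
    then show ?case by (simp add: chain_continuous_comp)
  next
    case (If \<phi> C1 C2)
    then show ?case by (simp add: chain_continuous_select)
  next
    case (Branch C1 C2)
    then show ?case
      unfolding wgcl_transformer.simps
      by (rule chain_continuous_binop[OF chain_continuous_plus_fun[OF add]])
  next
    case (Weight w)
    show ?case using chain_continuous_pointwise[of R "\<lambda>_. act w", OF act] by simp
  next
    case (While \<phi> C)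
    with \<open>reflp R\<close> show ?case
      by (simp add: chain_continuous_least_fixp chain_continuous_loop_body)
  qed
qed

context bicontinuous_module
begin

lemma wp_continuous: "chain_continuous (rel_fun (=) nat_le) (wp act C)"
  unfolding wp_eq_wgcl_transformer
  by (rule chain_continuous_wgcl_transformer[OF omega_cpo_nat_le add_continuous(1)
        act_continuous(1)])

lemma wlp_continuous: "chain_continuous (rel_fun (=) nat_le\<inverse>\<inverse>) (wlp act C)"
proof -
  obtain t :: 'm where "omega_cpo nat_le\<inverse>\<inverse> t"
    by (rule omega_cpo_nat_le_converse)
  then show ?thesis
    unfolding wlp_eq_wgcl_transformer
    by (rule chain_continuous_wgcl_transformer[OF _ add_continuous(2) act_continuous(2)])
qed

lemma wp_While_add:
  fixes C :: "('w, 'v, 'a) wgcl"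
  assumes IH: "\<And>X Y. wp act C (X + Y) = wp act C X + wp act C Y"
  shows "wp act (While \<phi> C) (X + Y) = wp act (While \<phi> C) X + wp act (While \<phi> C) Y"
proof -
  interpret wp_cpo: omega_cpo "rel_fun (=) nat_le" "0 :: ('v, 'a, 'm) weighting"
    using omega_cpo_rel_fun[OF omega_cpo_nat_le] by (simp add: zero_fun_def)
  define H where "H Z = (\<lambda>X \<sigma>. if \<phi> \<sigma> then wp act C X \<sigma> else Z \<sigma>)" for Z
  have cont: "chain_continuous (rel_fun (=) nat_le) (H Z)" for Z
    unfolding H_def by (rule chain_continuous_loop_body(1)[OF nat_le_reflp wp_continuous])
  have "H (X + Y) (A + B) \<sigma> = (H X A + H Y B) \<sigma>" for A B \<sigma>
    using fun_cong[OF IH[of A B], of \<sigma>] by (simp add: H_def plus_fun_def)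
  then have "H (X + Y) (A + B) = H X A + H Y B" for A B
    by (rule ext)
  then have iterates: "(H (X + Y) ^^ n) 0 = (H X ^^ n) 0 + (H Y ^^ n) 0" for n
    by (induction n) simp_all
  have "is_lub (rel_fun (=) nat_le) (\<lambda>n. (H X ^^ n) 0 + (H Y ^^ n) 0)
      (least_fixp (rel_fun (=) nat_le) (H X) + least_fixp (rel_fun (=) nat_le) (H Y))"
    by (rule wp_cpo.lub_diagonal[OF chain_continuous_plus_fun[OF add_continuous(1)]
          wp_cpo.iterates_chain[OF cont] wp_cpo.least_fixp_kleene(1)[OF cont]
          wp_cpo.iterates_chain[OF cont] wp_cpo.least_fixp_kleene(1)[OF cont]])
  with wp_cpo.least_fixp_kleene(1)[OF cont, of "X + Y"] show ?thesis
    unfolding wp_While H_def[symmetric] iterates by (rule wp_cpo.lub_unique)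
qed

lemma wp_add:
  fixes C :: "('w, 'v, 'a) wgcl"
  shows "wp act C (X + Y) = wp act C X + wp act C Y"
proof (induction C arbitrary: X Y)
  case (Seq C1 C2)
  show ?case by (simp only: wp.simps Seq.IH)
next
  case (If \<phi> C1 C2)
  show ?case by (simp only: wp.simps If.IH) (simp add: fun_eq_iff guard_mult_def)
next
  case (Branch C1 C2)
  show ?case by (simp only: wp.simps Branch.IH) (simp add: fun_eq_iff ac_simps)
next
  case (While \<phi> C)
  show ?case by (rule wp_While_add[OF While.IH])
qed (simp_all add: fun_eq_iff act_add)

lemma wlp_While_eq_wp_add_wlp_zero:
  fixes C :: "('w, 'v, 'a) wgcl"
  assumes IH: "\<And>f. wlp act C f = wp act C f + wlp act C 0"
  shows "wlp act (While \<phi> C) f = wp act (While \<phi> C) f + wlp act (While \<phi> C) 0"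
proof -
  obtain t :: 'm where t: "omega_cpo nat_le\<inverse>\<inverse> t"
    by (rule omega_cpo_nat_le_converse)
  interpret wlp_cpo: omega_cpo "rel_fun (=) nat_le\<inverse>\<inverse>" "(\<lambda>_. t) :: ('v, 'a, 'm) weighting"
    using t by (rule omega_cpo_rel_fun)
  define Hp where "Hp Z = (\<lambda>X \<sigma>. if \<phi> \<sigma> then wp act C X \<sigma> else Z \<sigma>)" for Z
  define Hl where "Hl Z = (\<lambda>X \<sigma>. if \<phi> \<sigma> then wlp act C X \<sigma> else Z \<sigma>)" for Z
  define L where "L = wp act (While \<phi> C) f"
  have "chain_continuous (rel_fun (=) nat_le) (Hp f)"
    unfolding Hp_def by (rule chain_continuous_loop_body(1)[OF nat_le_reflp wp_continuous])
  then have "Hp f L = L"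
    unfolding L_def wp_While Hp_def[symmetric]
    by (rule omega_cpo.least_fixp_kleene(2)[OF omega_cpo_rel_fun[OF omega_cpo_nat_le]])
  then have L_unfold: "L \<sigma> = (if \<phi> \<sigma> then wp act C L \<sigma> else f \<sigma>)" for \<sigma>
    unfolding Hp_def by (rule sym[OF fun_cong])
  have cont: "chain_continuous (rel_fun (=) nat_le\<inverse>\<inverse>) (Hl Z)" for Z
    unfolding Hl_def
    by (rule chain_continuous_loop_body(1)[OF omega_cpo.reflp[OF t] wlp_continuous])
  have "wlp act C (L + Z) = wp act C L + wlp act C Z" for Z
    by (simp only: IH[of "L + Z"] IH[of Z] wp_add add.assoc)
  then have commute: "Hl f (L + Z) = L + Hl 0 Z" for Z
    by (auto simp: fun_eq_iff Hl_def L_unfold)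
  have "L \<sigma> + t = t" for \<sigma>
    using omega_cpo.bottom_least[OF t] by (blast intro: nat_le_antisym nat_le_add_left)
  then have top: "L + (\<lambda>_. t) = (\<lambda>_. t)"
    by (simp add: fun_eq_iff)
  have "least_fixp (rel_fun (=) nat_le\<inverse>\<inverse>) (Hl f)
      = L + least_fixp (rel_fun (=) nat_le\<inverse>\<inverse>) (Hl 0)"
    by (rule wlp_cpo.least_fixp_transfer[OF cont cont
          chain_continuous_plus_fun(1)[OF add_continuous(2)] top commute])
  then show ?thesis
    unfolding wlp_While Hl_def[symmetric] L_def .
qed

lemma wlp_eq_wp_add_wlp_zero:
  fixes C :: "('w, 'v, 'a) wgcl"
  shows "wlp act C f = wp act C f + wlp act C 0"
proof (induction C arbitrary: f)
  case (Seq C1 C2)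
  have "wlp act (Seq C1 C2) f = wlp act C1 (wp act C2 f + wlp act C2 0)"
    by (simp only: wlp.simps Seq.IH(2)[of f])
  also have "\<dots> = wp act C1 (wp act C2 f) + (wp act C1 (wlp act C2 0) + wlp act C1 0)"
    by (simp only: Seq.IH(1)[of "wp act C2 f + wlp act C2 0"] wp_add add.assoc)
  also have "\<dots> = wp act (Seq C1 C2) f + wlp act (Seq C1 C2) 0"
    by (simp only: wp.simps wlp.simps Seq.IH(1)[of "wlp act C2 0"])
  finally show ?case .
next
  case (If \<phi> C1 C2)
  show ?case
    by (simp only: wlp.simps If.IH(1)[of f] If.IH(2)[of f]) (simp add: fun_eq_iff guard_mult_def)
next
  case (Branch C1 C2)
  show ?case
    by (simp only: wlp.simps Branch.IH(1)[of f] Branch.IH(2)[of f]) (simp add: fun_eq_iff ac_simps)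
next
  case (While \<phi> C)
  show ?case by (rule wlp_While_eq_wp_add_wlp_zero[OF While.IH])
qed (simp_all add: fun_eq_iff act_zero)

end

theorem mainTheorem5:
  fixes act :: "'w::monoid_mult \<Rightarrow> 'm::comm_monoid_add \<Rightarrow> 'm"
    and C :: "('w, 'v, 'a) wgcl"
    and f :: "('v, 'a, 'm) weighting"
  assumes "omega_bicontinuous_module act"
  shows "wlp act C f = (\<lambda>\<sigma>. wp act C f \<sigma> + wlp act C (\<lambda>_. 0) \<sigma>)"
proof -
  interpret bicontinuous_module act
    using assms by (rule bicontinuous_module.intro)
  show ?thesis
    using wlp_eq_wp_add_wlp_zero[of C f] by (simp add: plus_fun_def zero_fun_def)
qed

end
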